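(* Let $N$ be a positive integer, let $a_1\ge a_2\ge a_3$ be real numbers, and for $i=1,\dots,N$ let $\varphi_i(l,m,n,s)$ be real-valued functions of integers $l,m,n,s$. Write $\varphi_i(s)=\varphi_i(l,m,n,s)$ and $\boldsymbol\varphi(s)=(\varphi_1(s),\dots,\varphi_N(s))^T$. Suppose that for all integers $l,m,n,s$ and all $1\le i,i_1,i_2\le N$: (1) $\varphi_i(l+1,m,n,s)=\max(\varphi_i(l,m,n,s),\varphi_i(l,m,n,s+1)-a_1)$, $\varphi_i(l,m+1,n,s)=\max(\varphi_i(l,m,n,s),\varphi_i(l,m,n,s+1)-a_2)$, $\varphi_i(l,m,n+1,s)=\max(\varphi_i(l,m,n,s),\varphi_i(l,m,n,s+1)-a_3)$; (2) $\varphi_{i_1}(s)+\varphi_{i_2}(s)\le\max\big(\varphi_{i_1}(s-1)+\varphi_{i_2}(s+1),\ \varphi_{i_2}(s-1)+\varphi_{i_1}(s+1)\big)$; (3) for all integers $0\le k_1<k_2<k_3\le N$, $$\begin{aligned}&\mathrm{UP}[\boldsymbol\varphi(0)\cdots\widehat{\boldsymbol\varphi(k_2)}\cdots\boldsymbol\varphi(N)]+\mathrm{UP}[\boldsymbol\varphi(0)\cdots\widehat{\boldsymbol\varphi(k_1)}\cdots\widehat{\boldsymbol\varphi(k_3)}\cdots\boldsymbol\varphi(N+1)]\\ =\max\Big(&\mathrm{UP}[\boldsymbol\varphi(0)\cdots\widehat{\boldsymbol\varphi(k_3)}\cdots\boldsymbol\varphi(N)]+\mathrm{UP}[\boldsymbol\varphi(0)\cdots\widehat{\boldsymbol\varphi(k_1)}\cdots\widehat{\boldsymbol\varphi(k_2)}\cdots\boldsymbol\varphi(N+1)],\\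 &\mathrm{UP}[\boldsymbol\varphi(0)\cdots\widehat{\boldsymbol\varphi(k_1)}\cdots\boldsymbol\varphi(N)]+\mathrm{UP}[\boldsymbol\varphi(0)\cdots\widehat{\boldsymbol\varphi(k_2)}\cdots\widehat{\boldsymbol\varphi(k_3)}\cdots\boldsymbol\varphi(N+1)]\Big)\end{aligned}$$ (all vectors evaluated at the same $(l,m,n)$). Define $\tau(l,m,n)=\mathrm{UP}[\boldsymbol\varphi(0)\ \boldsymbol\varphi(1)\ \cdots\ \boldsymbol\varphi(N-1)]$, i.e. the ultradiscrete permanent of the $N\times N$ matrix $[\varphi_i(l,m,n,j-1)]_{1\le i,j\le N}$. Then for all integers $l,m,n$, $$\tau(l,m+1,n)+\tau(l+1,m,n+1)=\max\big(\tau(l+1,m,n)+\tau(l,m+1,n+1)-a_1+a_2,\ \tau(l,m,n+1)+\tau(l+1,m+1,n)\big).$$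
   Context: For a real $N\times N$ matrix $A=[a_{ij}]$, the ultradiscrete permanent is $\mathrm{UP}[A]=\max_{\pi}(a_{1\pi_1}+\cdots+a_{N\pi_N})$, maximum over all permutations $\pi$ of $\{1,\dots,N\}$. $\mathrm{UP}[\boldsymbol v_1\ \cdots\ \boldsymbol v_N]$ denotes the UP of the matrix with columns $\boldsymbol v_1,\dots,\boldsymbol v_N$ in that order; a hat $\widehat{\boldsymbol\varphi(k)}$ means that column is omitted from the list $\boldsymbol\varphi(0),\boldsymbol\varphi(1),\dots$ (so each matrix in condition (3) has exactly $N$ columns). *)

theory Defs
  imports Complex_Main "HOL-Combinatorics.Permutations"
begin

definition UP :: "nat \<Rightarrow> (nat \<Rightarrow> nat \<Rightarrow> real) \<Rightarrow> real" where
  "UP N A = Max {(\<Sum>i<N. A i (p i)) | p. p permutes {..<N}}"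

text \<open>UP of the N x N matrix whose j-th column (j = 0..N-1) is the vector
  phi(cols ! j) = (phi_1(cols ! j), ..., phi_N(cols ! j))^T at the point (l,m,n).
  Row i (0-based) corresponds to phi_(i+1).\<close>
definition UPcols :: "nat \<Rightarrow> (nat \<Rightarrow> int \<Rightarrow> int \<Rightarrow> int \<Rightarrow> int \<Rightarrow> real)
    \<Rightarrow> int \<Rightarrow> int \<Rightarrow> int \<Rightarrow> int list \<Rightarrow> real" where
  "UPcols N phi l m n cols = UP N (\<lambda>i j. phi (Suc i) l m n (cols ! j))"

definition omit :: "int \<Rightarrow> int set \<Rightarrow> int list" where
  "omit M K = filter (\<lambda>j. j \<notin> K) [0..M]"


definition tau :: "nat \<Rightarrow> (nat \<Rightarrow> int \<Rightarrow> int \<Rightarrow> int \<Rightarrow> int \<Rightarrow> real) \<Rightarrow> int \<Rightarrow> int \<Rightarrow> int \<Rightarrow> real" where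
  "tau N phi l m n = UP N (\<lambda>i j. phi (Suc i) l m n (int j))"

end

theory Submission
  imports Defs
begin

text \<open>Write \<open>c s i\<close> for the \<open>i\<close>-th entry of the column \<open>\<phi>(s)\<close>. One evolution step
  \<open>c' s = max (c s) (c (s + 1) - a)\<close> turns the permanent of the columns \<open>s\<^sub>0 < \<dots> < s\<^sub>N\<^sub>-\<^sub>1\<close> of \<open>c'\<close>
  into the maximum, over 0/1-shifts \<open>\<epsilon>\<close>, of the permanent of the columns \<open>s\<^sub>j + \<epsilon>\<^sub>j\<close> of \<open>c\<close>
  minus \<open>a \<Sum> \<epsilon>\<^sub>j\<close>, and the exchange inequality (2) allows us to keep only shifts that remain
  strictly increasing. Starting from the columns \<open>0, \<dots>, N - 1\<close>, one step therefore yields the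
  maximum of \<open>u k - (N - k) a\<close> over \<open>k\<close>, and two steps with rates \<open>b \<le> a\<close> yield the maximum of
  \<open>Q i j - (N - i) b - (N + 1 - j) a\<close> over \<open>i < j\<close>, where \<open>u\<close> and \<open>Q\<close> are the permanents of
  \<open>\<phi>(0), \<dots>, \<phi>(N + 1)\<close> with one, respectively two, columns omitted. The bilinear equation
  becomes an identity between such maxima, which follows from the Pluecker-type relation (3)
  by comparing the positions of the maximising indices.\<close>

section \<open>Ultradiscrete permanents\<close>

lemma UP_eq_Max_image: "UP N A = (MAX p\<in>{p. p permutes {..<N}}. \<Sum>i<N. A i (p i))"
  unfolding UP_def by (rule arg_cong[where f = Max]) blast

lemma finite_UP_sums:
  fixes A :: "nat \<Rightarrow> nat \<Rightarrow> real"
  shows "finite ((\<lambda>p. \<Sum>i<N. A i (p i)) ` {p. p permutes {..<N}})"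
  by (intro finite_imageI finite_permutations finite_lessThan)

lemma sum_le_UP: "p permutes {..<N} \<Longrightarrow> (\<Sum>i<N. A i (p i)) \<le> UP N A"
  unfolding UP_eq_Max_image by (rule Max_ge[OF finite_UP_sums]) blast

lemma UP_attained:
  obtains p where "p permutes {..<N}" "UP N A = (\<Sum>i<N. A i (p i))"
proof -
  have "UP N A \<in> (\<lambda>p. \<Sum>i<N. A i (p i)) ` {p. p permutes {..<N}}"
    unfolding UP_eq_Max_image by (rule Max_in[OF finite_UP_sums]) (use permutes_id in blast)
  then show ?thesis using that by blast
qed

lemma permutes_lessThan_less: "p permutes {..<N} \<Longrightarrow> i < N \<Longrightarrow> p i < N"
  by (metis lessThan_iff permutes_in_image)

lemma sum_permutes_reindex:
  fixes g :: "nat \<Rightarrow> 'a::comm_monoid_add"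
  assumes "p permutes {..<N}"
  shows "(\<Sum>i<N. g (p i)) = (\<Sum>j<N. g j)"
  using sum.reindex_bij_betw[OF permutes_imp_bij[OF assms], of g] by simp

lemma UP_cong:
  assumes "\<And>i j. i < N \<Longrightarrow> j < N \<Longrightarrow> A i j = B i j"
  shows "UP N A = UP N B"
  unfolding UP_eq_Max_image
  by (intro arg_cong[where f = Max] image_cong refl sum.cong assms)
     (auto simp: permutes_lessThan_less)

lemma sum_differ_at_two:
  fixes g h :: "nat \<Rightarrow> real"
  assumes "r1 < N" "r2 < N" "r1 \<noteq> r2"
    and "\<And>i. i < N \<Longrightarrow> i \<noteq> r1 \<Longrightarrow> i \<noteq> r2 \<Longrightarrow> g i = h i"
  shows "(\<Sum>i<N. g i) = (\<Sum>i<N. h i) + g r1 + g r2 - h r1 - h r2"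
proof -
  have "(\<Sum>i<N. g i - h i) = (\<Sum>i\<in>{r1, r2}. g i - h i)"
    by (rule sum.mono_neutral_right) (use assms in auto)
  then show ?thesis using assms(3) by (simp add: sum_subtractf)
qed

text \<open>Take a permutation attaining \<open>UP N A\<close>; it uses columns \<open>p\<close> and \<open>q\<close> in two rows, and the
  exchange inequality shows that it or its composite with the transposition of these two rows
  does at least as well for \<open>B\<close>.\<close>

lemma UP_le_by_column_exchange:
  fixes A B :: "nat \<Rightarrow> nat \<Rightarrow> real"
  assumes pq: "p < N" "q < N" "p \<noteq> q"
    and same: "\<And>i j. i < N \<Longrightarrow> j < N \<Longrightarrow> j \<noteq> p \<Longrightarrow> j \<noteq> q \<Longrightarrow> A i j = B i j"
    and exchange: "\<And>i1 i2. i1 < N \<Longrightarrow> i2 < N \<Longrightarrow> i1 \<noteq> i2 \<Longrightarrow>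
       A i1 p + A i2 q \<le> max (B i1 p + B i2 q) (B i2 p + B i1 q)"
  shows "UP N A \<le> UP N B"
proof -
  obtain s where s: "s permutes {..<N}" and UP_A: "UP N A = (\<Sum>i<N. A i (s i))"
    using UP_attained by blast
  define r1 where "r1 = inv s p"
  define r2 where "r2 = inv s q"
  have r: "r1 < N" "r2 < N"
    using permutes_lessThan_less[OF permutes_inv[OF s]] pq unfolding r1_def r2_def by auto
  have sr: "s r1 = p" "s r2 = q"
    unfolding r1_def r2_def using permutes_inverses[OF s] by auto
  have r_ne: "r1 \<noteq> r2" using sr pq by auto
  have A_eq_B: "A i (s i) = B i (s i)" if "i < N" "i \<noteq> r1" "i \<noteq> r2" for i
  proof -
    have "s i \<noteq> p" "s i \<noteq> q" using that sr permutes_inj[OF s] by (metis injD)+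
    then show ?thesis using same[OF that(1) permutes_lessThan_less[OF s that(1)]] by blast
  qed
  have sum_A: "(\<Sum>i<N. A i (s i)) = (\<Sum>i<N. B i (s i)) + A r1 p + A r2 q - B r1 p - B r2 q"
    using sum_differ_at_two[OF r r_ne, of "\<lambda>i. A i (s i)" "\<lambda>i. B i (s i)"] A_eq_B sr by simp
  show ?thesis
  proof (cases "A r1 p + A r2 q \<le> B r1 p + B r2 q")
    case True
    then show ?thesis using sum_le_UP[OF s, of B] sum_A UP_A by linarith
  next
    case False
    then have swapped: "A r1 p + A r2 q \<le> B r2 p + B r1 q"
      using exchange[OF r r_ne] by linarith
    define s' where "s' = s \<circ> transpose r1 r2"
    have s': "s' permutes {..<N}"
      unfolding s'_def by (intro permutes_compose[OF _ s] permutes_swap_id) (use r in auto)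
    have s'_at: "s' r1 = q" "s' r2 = p" "\<And>i. i \<noteq> r1 \<Longrightarrow> i \<noteq> r2 \<Longrightarrow> s' i = s i"
      unfolding s'_def using sr by auto
    have "(\<Sum>i<N. B i (s' i)) = (\<Sum>i<N. A i (s i)) + B r1 q + B r2 p - A r1 p - A r2 q"
      using sum_differ_at_two[OF r r_ne, of "\<lambda>i. B i (s' i)" "\<lambda>i. A i (s i)"] A_eq_B s'_at sr
      by simp
    then show ?thesis using sum_le_UP[OF s', of B] UP_A swapped by linarith
  qed
qed

section \<open>Permanents of selected columns and one evolution step\<close>

definition colUP :: "(int \<Rightarrow> nat \<Rightarrow> real) \<Rightarrow> nat \<Rightarrow> int list \<Rightarrow> real" where
  "colUP c N cols = UP N (\<lambda>i j. c (cols ! j) i)"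

definition shift_cols :: "int list \<Rightarrow> (nat \<Rightarrow> bool) \<Rightarrow> nat \<Rightarrow> int list" where
  "shift_cols s f N = map (\<lambda>j. s ! j + of_bool (f j)) [0..<N]"

definition shift_weight :: "(nat \<Rightarrow> bool) \<Rightarrow> nat \<Rightarrow> nat" where
  "shift_weight f N = (\<Sum>j<N. of_bool (f j))"

definition column_exchange_ineq :: "(int \<Rightarrow> nat \<Rightarrow> real) \<Rightarrow> nat \<Rightarrow> bool" where
  "column_exchange_ineq c N \<longleftrightarrow> (\<forall>s i1 i2. i1 < N \<longrightarrow> i2 < N \<longrightarrow>
     c s i1 + c s i2 \<le> max (c (s - 1) i1 + c (s + 1) i2) (c (s - 1) i2 + c (s + 1) i1))"

definition evolves :: "(int \<Rightarrow> nat \<Rightarrow> real) \<Rightarrow> (int \<Rightarrow> nat \<Rightarrow> real) \<Rightarrow> real \<Rightarrow> nat \<Rightarrow> bool" where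
  "evolves c c' a N \<longleftrightarrow> (\<forall>s i. i < N \<longrightarrow> c' s i = max (c s i) (c (s + 1) i - a))"

lemma length_shift_cols [simp]: "length (shift_cols s f N) = N"
  unfolding shift_cols_def by simp

lemma nth_shift_cols: "j < N \<Longrightarrow> shift_cols s f N ! j = s ! j + of_bool (f j)"
  unfolding shift_cols_def by simp

lemma colUP_shift_le_evolved:
  assumes evol: "evolves c c' a N"
  shows "colUP c N (shift_cols s f N) - a * shift_weight f N \<le> colUP c' N s"
proof -
  obtain p where p: "p permutes {..<N}"
    and UP_p: "colUP c N (shift_cols s f N) = (\<Sum>i<N. c (shift_cols s f N ! p i) i)"
    using UP_attained unfolding colUP_def by blast
  have entry: "c (shift_cols s f N ! j) i - a * of_bool (f j) \<le> c' (s ! j) i"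
    if "i < N" "j < N" for i j
    using evol that by (cases "f j") (auto simp: evolves_def nth_shift_cols)
  have "(\<Sum>i<N. c (shift_cols s f N ! p i) i - a * of_bool (f (p i))) \<le> (\<Sum>i<N. c' (s ! p i) i)"
    by (rule sum_mono) (use entry permutes_lessThan_less[OF p] in auto)
  also have "\<dots> \<le> colUP c' N s"
    unfolding colUP_def by (rule sum_le_UP[OF p])
  finally show ?thesis
    using UP_p sum_permutes_reindex[OF p, of "\<lambda>j. of_bool (f j) :: real"]
    by (simp add: sum_subtractf sum_distrib_left shift_weight_def mult.commute)
qed

lemma colUP_evolved_le_shift:
  assumes evol: "evolves c c' a N"
  obtains f where "colUP c' N s \<le> colUP c N (shift_cols s f N) - a * shift_weight f N"
proof -
  obtain p where p: "p permutes {..<N}" and UP_p: "colUP c' N s = (\<Sum>i<N. c' (s ! p i) i)"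
    using UP_attained unfolding colUP_def by blast
  define f where "f j \<longleftrightarrow> c (s ! j) (inv p j) < c (s ! j + 1) (inv p j) - a" for j
  have entry: "c' (s ! p i) i = c (shift_cols s f N ! p i) i - a * of_bool (f (p i))"
    if "i < N" for i
  proof -
    have "inv p (p i) = i" using permutes_inverses[OF p] by simp
    then show ?thesis
      using evol that permutes_lessThan_less[OF p that]
      by (auto simp: evolves_def nth_shift_cols f_def max_def)
  qed
  have "colUP c' N s
      = (\<Sum>i<N. c (shift_cols s f N ! p i) i) - a * (\<Sum>i<N. of_bool (f (p i)))"
    unfolding UP_p using entry by (simp add: sum_subtractf sum_distrib_left)
  also have "\<dots> \<le> colUP c N (shift_cols s f N) - a * shift_weight f N"
    using sum_le_UP[OF p, of "\<lambda>i j. c (shift_cols s f N ! j) i"]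
      sum_permutes_reindex[OF p, of "\<lambda>j. of_bool (f j) :: real"]
    unfolding colUP_def shift_weight_def by simp
  finally show ?thesis using that by blast
qed

lemma colUP_shift_exchange:
  assumes ineq: "column_exchange_ineq c N" and j: "Suc j < N"
    and adjacent: "s ! Suc j = s ! j + 1" and f: "f j" "\<not> f (Suc j)"
  shows "colUP c N (shift_cols s f N) \<le> colUP c N (shift_cols s (f(j := False, Suc j := True)) N)"
  unfolding colUP_def
proof (rule UP_le_by_column_exchange[of j N "Suc j"])
  let ?g = "f(j := False, Suc j := True)"
  show "j < N" "Suc j < N" "j \<noteq> Suc j" using j by auto
  show "c (shift_cols s f N ! k) i = c (shift_cols s ?g N ! k) i"
    if "i < N" "k < N" "k \<noteq> j" "k \<noteq> Suc j" for i k
    using that by (simp add: nth_shift_cols)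
  have old: "shift_cols s f N ! j = s ! j + 1" "shift_cols s f N ! Suc j = s ! j + 1"
    using j adjacent f by (simp_all add: nth_shift_cols)
  have new: "shift_cols s ?g N ! j = (s ! j + 1) - 1" "shift_cols s ?g N ! Suc j = (s ! j + 1) + 1"
    using j adjacent by (simp_all add: nth_shift_cols)
  show "c (shift_cols s f N ! j) i1 + c (shift_cols s f N ! Suc j) i2
      \<le> max (c (shift_cols s ?g N ! j) i1 + c (shift_cols s ?g N ! Suc j) i2)
             (c (shift_cols s ?g N ! j) i2 + c (shift_cols s ?g N ! Suc j) i1)"
    if "i1 < N" "i2 < N" "i1 \<noteq> i2" for i1 i2
    unfolding old new using ineq that unfolding column_exchange_ineq_def by blast
qed

lemma sum_split_adjacent:
  fixes g :: "nat \<Rightarrow> 'a::comm_monoid_add"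
  assumes "Suc j < N"
  shows "(\<Sum>k<N. g k) = (\<Sum>k\<in>{..<N} - {j, Suc j}. g k) + g j + g (Suc j)"
proof -
  have "(\<Sum>k<N. g k) = (\<Sum>k\<in>{..<N} - {j, Suc j}. g k) + (\<Sum>k\<in>{j, Suc j}. g k)"
    by (rule sum.subset_diff) (use assms in auto)
  then show ?thesis by (simp add: add.assoc)
qed

lemma weighted_sum_move_right:
  fixes w :: "nat \<Rightarrow> nat"
  assumes "Suc j < N" "f j" "\<not> f (Suc j)"
  shows "(\<Sum>k<N. w k * of_bool ((f(j := False, Suc j := True)) k)) + w j
       = (\<Sum>k<N. w k * of_bool (f k)) + w (Suc j)"
proof -
  have "(\<Sum>k\<in>{..<N} - {j, Suc j}. w k * of_bool ((f(j := False, Suc j := True)) k))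
      = (\<Sum>k\<in>{..<N} - {j, Suc j}. w k * of_bool (f k))"
    by (rule sum.cong) auto
  then show ?thesis
    using assms sum_split_adjacent[OF assms(1), of "\<lambda>k. w k * of_bool ((f(j := False, Suc j := True)) k)"]
      sum_split_adjacent[OF assms(1), of "\<lambda>k. w k * of_bool (f k)"]
    by simp
qed

text \<open>Moving a shift from a column to the adjacent next one lowers \<open>\<Sum> (N - j) \<epsilon>\<^sub>j\<close>, so
  repeated exchanges terminate in a strictly increasing shift.\<close>

lemma exists_sorted_shift_ge:
  assumes ineq: "column_exchange_ineq c N" and len: "length s = N" and sorted: "sorted_wrt (<) s"
  shows "\<exists>f'. sorted_wrt (<) (shift_cols s f' N) \<and> shift_weight f' N = shift_weight f N \<and>
           colUP c N (shift_cols s f N) \<le> colUP c N (shift_cols s f' N)"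
proof (induction f rule: measure_induct_rule[where f = "\<lambda>f. \<Sum>j<N. (N - j) * of_bool (f j)"])
  case (less f)
  show ?case
  proof (cases "sorted_wrt (<) (shift_cols s f N)")
    case True
    then show ?thesis by blast
  next
    case False
    then obtain j where j: "Suc j < N"
      and not_less: "\<not> shift_cols s f N ! j < shift_cols s f N ! Suc j"
      unfolding sorted_wrt_iff_nth_Suc_transp[OF transp_on_less] by auto
    have "s ! j < s ! Suc j" using sorted_wrt_nth_less[OF sorted, of j "Suc j"] j len by simp
    then have f: "f j" "\<not> f (Suc j)" and adjacent: "s ! Suc j = s ! j + 1"
      using not_less j by (auto simp: nth_shift_cols of_bool_def split: if_splits)
    define g where "g = f(j := False, Suc j := True)"
    have "(\<Sum>k<N. (N - k) * of_bool (g k)) < (\<Sum>k<N. (N - k) * of_bool (f k))"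
      using weighted_sum_move_right[OF j f, of "\<lambda>k. N - k"] j unfolding g_def by simp
    then obtain f' where f': "sorted_wrt (<) (shift_cols s f' N)"
      "shift_weight f' N = shift_weight g N" "colUP c N (shift_cols s g N) \<le> colUP c N (shift_cols s f' N)"
      using less.IH by blast
    have "shift_weight g N = shift_weight f N"
      using weighted_sum_move_right[OF j f, of "\<lambda>_. 1"] unfolding g_def shift_weight_def by simp
    moreover have "colUP c N (shift_cols s f N) \<le> colUP c N (shift_cols s g N)"
      unfolding g_def by (rule colUP_shift_exchange[OF ineq j adjacent f])
    ultimately show ?thesis using f' by (intro exI[of _ f']) auto
  qed
qed

lemma colUP_evolved_le_sorted_shift:
  assumes "evolves c c' a N" "column_exchange_ineq c N" "length s = N" "sorted_wrt (<) s"
  obtains f where "sorted_wrt (<) (shift_cols s f N)"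
    "colUP c' N s \<le> colUP c N (shift_cols s f N) - a * shift_weight f N"
proof -
  obtain f0 where "colUP c' N s \<le> colUP c N (shift_cols s f0 N) - a * shift_weight f0 N"
    using colUP_evolved_le_shift[OF assms(1)] by blast
  moreover obtain f where "sorted_wrt (<) (shift_cols s f N)" "shift_weight f N = shift_weight f0 N"
      "colUP c N (shift_cols s f0 N) \<le> colUP c N (shift_cols s f N)"
    using exists_sorted_shift_ge[OF assms(2-4)] by blast
  ultimately show ?thesis using that by fastforce
qed

lemma int_shift_weight:
  assumes "sorted_wrt (<) s" "sorted_wrt (<) (shift_cols s f N)" "length s = N"
  shows "int (shift_weight f N) = \<Sum>(set (shift_cols s f N)) - \<Sum>(set s)"
proof -
  have distinct: "distinct s" "distinct (shift_cols s f N)" using assms strict_sorted_iff by auto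
  have "\<Sum>(set (shift_cols s f N)) = (\<Sum>j<N. s ! j + of_bool (f j))"
    using sum_list_distinct_conv_sum_set[OF distinct(2), of id]
    by (simp add: sum_list_sum_nth nth_shift_cols atLeast0LessThan)
  also have "\<dots> = \<Sum>(set s) + int (shift_weight f N)"
    using assms(3) sum_list_distinct_conv_sum_set[OF distinct(1), of id]
    by (simp add: sum.distrib sum_list_sum_nth atLeast0LessThan shift_weight_def)
  finally show ?thesis by simp
qed

section \<open>Omitting columns\<close>

lemma sorted_omit: "sorted_wrt (<) (omit M K)"
  unfolding omit_def by (rule sorted_wrt_filter) simp

lemma set_omit: "set (omit M K) = {0..M} - K"
  unfolding omit_def by auto

lemma omit_unique:
  assumes "sorted_wrt (<) t" "set t = {0..M} - K"
  shows "t = omit M K"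
  using assms sorted_distinct_set_unique sorted_omit set_omit strict_sorted_iff by metis

lemma omit_eqI:
  assumes sorted: "sorted_wrt (<) t" and sub: "set t \<subseteq> {0..M} - K"
    and len: "length t = card ({0..M} - K)"
  shows "t = omit M K"
proof (rule omit_unique[OF sorted])
  have "card (set t) = card ({0..M} - K)"
    using distinct_card sorted len strict_sorted_iff by metis
  then show "set t = {0..M} - K" using card_subset_eq[OF _ sub] by auto
qed

lemma card_omit_one: "0 \<le> k \<Longrightarrow> k \<le> M \<Longrightarrow> card ({0..M} - {k :: int}) = nat M"
  by (subst card_Diff_singleton) auto

lemma card_omit_two:
  assumes "0 \<le> i" "i < j" "j \<le> M"
  shows "card ({0..M} - {i :: int, j}) = nat M - 1"
proof -
  have "card ({0..M} - {i, j}) = card {0..M} - card {i, j}"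
    by (rule card_Diff_subset) (use assms in auto)
  then show ?thesis using assms by simp
qed

lemma omit_pair_last: "0 \<le> M + 1 \<Longrightarrow> omit (M + 1) {k, M + 1} = omit M {k}"
  unfolding omit_def by (simp add: upto_rec2) (rule filter_cong; auto)

lemma omit_single_eq_map:
  assumes "0 \<le> k" "k \<le> int N"
  shows "omit (int N) {k} = map (\<lambda>p. if int p < k then int p else int p + 1) [0..<N]"
proof (rule sym, rule omit_eqI)
  show "sorted_wrt (<) (map (\<lambda>p. if int p < k then int p else int p + 1) [0..<N])"
    unfolding sorted_wrt_iff_nth_less by auto
qed (use assms card_omit_one[OF assms] in auto)

lemma length_omit_single: "0 \<le> k \<Longrightarrow> k \<le> int N \<Longrightarrow> length (omit (int N) {k}) = N"
  by (simp add: omit_single_eq_map)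

lemma nth_omit_single:
  "0 \<le> k \<Longrightarrow> k \<le> int N \<Longrightarrow> p < N \<Longrightarrow> omit (int N) {k} ! p = (if int p < k then int p else int p + 1)"
  by (simp add: omit_single_eq_map)

lemma shift_weight_omit_single:
  assumes k: "0 \<le> k" "k \<le> int N" and ij: "0 \<le> i" "i < j" "j \<le> int N + 1"
    and shift: "shift_cols (omit (int N) {k}) f N = omit (int N + 1) {i, j}"
  shows "int (shift_weight f N) = int N + 1 - i - j + k"
proof -
  have "int (shift_weight f N) = \<Sum>({0..int N + 1} - {i, j}) - \<Sum>({0..int N} - {k})"
    using int_shift_weight[OF sorted_omit, of "int N" "{k}" f N] shift sorted_omit
      length_omit_single[OF k] by (simp add: set_omit)
  also have "\<dots> = (\<Sum>{0..int N} + (int N + 1) - i - j) - (\<Sum>{0..int N} - k)"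
  proof -
    have "{0..int N + 1} = insert (int N + 1) {0..int N}" by auto
    then have "\<Sum>{0..int N + 1} = \<Sum>{0..int N} + (int N + 1)" by simp
    then show ?thesis using k ij by (simp add: sum_diff)
  qed
  finally show ?thesis by simp
qed

text \<open>Among the two columns \<open>i < j\<close> missing after the shift, \<open>j\<close> lies beyond the gap \<open>k\<close>: otherwise
  the first \<open>j\<close> shifted columns would be \<open>j\<close> distinct values in \<open>{0..j} - {i, j}\<close>.\<close>

lemma sorted_shift_omit_single:
  assumes k: "0 \<le> k" "k \<le> int N" and sorted: "sorted_wrt (<) (shift_cols (omit (int N) {k}) f N)"
  obtains i j where "0 \<le> i" "i < j" "j \<le> int N + 1" "k < j"
    "shift_cols (omit (int N) {k}) f N = omit (int N + 1) {i, j}"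
proof -
  let ?t = "shift_cols (omit (int N) {k}) f N"
  have t_nth: "?t ! p = (if int p < k then int p else int p + 1) + of_bool (f p)" if "p < N" for p
    using that k by (simp add: nth_shift_cols nth_omit_single)
  have distinct: "distinct ?t" using sorted strict_sorted_iff by blast
  have t_sub: "set ?t \<subseteq> {0..int N + 1}"
    using t_nth k by (auto simp: in_set_conv_nth)
  have "card ({0..int N + 1} - set ?t) = 2"
    using card_Diff_subset[OF _ t_sub] distinct_card[OF distinct] by simp
  then obtain x y where xy: "{0..int N + 1} - set ?t = {x, y}" "x \<noteq> y"
    by (auto simp: card_2_iff)
  define i where "i = min x y"
  define j where "j = max x y"
  have missing: "{0..int N + 1} - set ?t = {i, j}" and ij: "i < j"
    using xy unfolding i_def j_def by (auto simp: min_def max_def)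
  then have range: "0 \<le> i" "j \<le> int N + 1" by auto
  have t_eq: "?t = omit (int N + 1) {i, j}"
    by (rule omit_unique[OF sorted]) (use missing t_sub in blast)
  have "k < j"
  proof (rule ccontr)
    assume "\<not> k < j"
    have "nth ?t ` {..<nat j} \<subseteq> {0..j} - {i, j}"
    proof
      fix x assume "x \<in> nth ?t ` {..<nat j}"
      then obtain p where p: "p < nat j" "x = ?t ! p" by blast
      have "p < N" using p \<open>\<not> k < j\<close> k by linarith
      then have "x \<in> set ?t" using p by simp
      then have "x \<notin> {i, j}" using missing by blast
      moreover have "x \<in> {0..j}"
        using t_nth[OF \<open>p < N\<close>] p \<open>\<not> k < j\<close> by (auto simp: of_bool_def)
      ultimately show "x \<in> {0..j} - {i, j}" by blast
    qed
    moreover have "inj_on (nth ?t) {..<nat j}"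
      using \<open>\<not> k < j\<close> k by (intro inj_on_nth[OF distinct]) auto
    ultimately have "card {..<nat j} \<le> card ({0..j} - {i, j})"
      by (metis card_image card_mono finite_Diff finite_atLeastAtMost_int)
    then show False using card_omit_two[OF range(1) ij order_refl] ij range by simp
  qed
  then show ?thesis using that range ij t_eq by blast
qed

lemma shift_omit_single_interval:
  assumes "0 \<le> i" "i < j" "j \<le> int N + 1"
  shows "shift_cols (omit (int N) {j - 1}) (\<lambda>p. i \<le> int p) N = omit (int N + 1) {i, j}"
proof (rule omit_eqI)
  let ?t = "shift_cols (omit (int N) {j - 1}) (\<lambda>p. i \<le> int p) N"
  have t_nth: "?t ! p = (if int p < j - 1 then int p else int p + 1) + of_bool (i \<le> int p)"
    if "p < N" for p
    using that assms by (simp add: nth_shift_cols nth_omit_single)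
  show "sorted_wrt (<) ?t"
    unfolding sorted_wrt_iff_nth_less using t_nth by auto
  show "set ?t \<subseteq> {0..int N + 1} - {i, j}"
    using t_nth assms by (auto simp: in_set_conv_nth of_bool_def split: if_splits)
  show "length ?t = card ({0..int N + 1} - {i, j})"
    using card_omit_two[OF assms] by simp
qed

section \<open>Evolving the columns \<open>0, \<dots>, N - 1\<close>\<close>

lemma colUP_evolved_omit_single_le:
  assumes evol: "evolves c c' a N" and ineq: "column_exchange_ineq c N" and k: "0 \<le> k" "k \<le> int N"
  obtains i j where "0 \<le> i" "i < j" "j \<le> int N + 1" "k < j"
    "colUP c' N (omit (int N) {k}) \<le> colUP c N (omit (int N + 1) {i, j}) - of_int (int N + 1 - i - j + k) * a"
proof -
  obtain f where sorted: "sorted_wrt (<) (shift_cols (omit (int N) {k}) f N)"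
    and le: "colUP c' N (omit (int N) {k}) \<le> colUP c N (shift_cols (omit (int N) {k}) f N) - a * shift_weight f N"
    using colUP_evolved_le_sorted_shift[OF evol ineq length_omit_single[OF k] sorted_omit] by blast
  obtain i j where ij: "0 \<le> i" "i < j" "j \<le> int N + 1" "k < j"
    and shift: "shift_cols (omit (int N) {k}) f N = omit (int N + 1) {i, j}"
    using sorted_shift_omit_single[OF k sorted] by blast
  have "real (shift_weight f N) = of_int (int N + 1 - i - j + k)"
    using shift_weight_omit_single[OF k ij(1-3) shift] by (metis of_int_of_nat_eq)
  then show ?thesis using that ij le shift by (simp add: mult.commute)
qed

lemma colUP_evolved_omit_single_ge:
  assumes evol: "evolves c c' a N" and ij: "0 \<le> i" "i < j" "j \<le> int N + 1"
  shows "colUP c N (omit (int N + 1) {i, j}) - of_int (int N - i) * a \<le> colUP c' N (omit (int N) {j - 1})"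
proof -
  have k: "0 \<le> j - 1" "j - 1 \<le> int N" using ij by auto
  have shift: "shift_cols (omit (int N) {j - 1}) (\<lambda>p. i \<le> int p) N = omit (int N + 1) {i, j}"
    by (rule shift_omit_single_interval[OF ij])
  have "int (shift_weight (\<lambda>p. i \<le> int p) N) = int N - i"
    using shift_weight_omit_single[OF k ij shift] by simp
  then have "real (shift_weight (\<lambda>p. i \<le> int p) N) = of_int (int N - i)"
    by (metis of_int_of_nat_eq)
  then show ?thesis
    using colUP_shift_le_evolved[OF evol, of "omit (int N) {j - 1}" "\<lambda>p. i \<le> int p"] shift
    by (simp add: mult.commute)
qed

lemma eq_Max_imageI:
  fixes g :: "'a \<Rightarrow> 'b::linorder"
  assumes "finite A" "x \<in> A" "X \<le> g x" "\<And>y. y \<in> A \<Longrightarrow> g y \<le> X"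
  shows "X = (MAX y\<in>A. g y)"
proof (rule antisym)
  have "g x \<le> (MAX y\<in>A. g y)" using assms(1,2) by simp
  then show "X \<le> (MAX y\<in>A. g y)" using assms(3) by order
  show "(MAX y\<in>A. g y) \<le> X" using assms(1,2,4) by (subst Max_le_iff) auto
qed

lemma colUP_one_step:
  assumes evol: "evolves c c' a N" and ineq: "column_exchange_ineq c N"
  shows "colUP c' N (omit (int N) {int N})
       = (MAX k\<in>{0..int N}. colUP c N (omit (int N) {k}) - of_int (int N - k) * a)"
proof -
  obtain i j where ij: "0 \<le> i" "i < j" "j \<le> int N + 1" "int N < j"
    and le: "colUP c' N (omit (int N) {int N})
           \<le> colUP c N (omit (int N + 1) {i, j}) - of_int (int N + 1 - i - j + int N) * a"
    using colUP_evolved_omit_single_le[OF evol ineq, of "int N"] by auto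
  have j: "j = int N + 1" using ij by simp
  show ?thesis
  proof (rule eq_Max_imageI[of _ i])
    show "i \<in> {0..int N}" using ij by simp
    show "colUP c' N (omit (int N) {int N}) \<le> colUP c N (omit (int N) {i}) - of_int (int N - i) * a"
      using le unfolding j omit_pair_last[of "int N", simplified] by (simp add: algebra_simps)
    show "colUP c N (omit (int N) {k}) - of_int (int N - k) * a \<le> colUP c' N (omit (int N) {int N})"
      if "k \<in> {0..int N}" for k
      using colUP_evolved_omit_single_ge[OF evol, of k "int N + 1"] that by (simp add: omit_pair_last)
  qed simp
qed

lemma finite_index_pairs: "finite {(i, j). 0 \<le> i \<and> i < j \<and> j \<le> (M :: int) + 1}"
  by (rule finite_subset[of _ "{0..M + 1} \<times> {0..M + 1}"]) auto

lemma colUP_two_steps: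
  assumes evol1: "evolves c c1 b N" and evol2: "evolves c1 c2 a N"
    and ineq: "column_exchange_ineq c N" "column_exchange_ineq c1 N" and "b \<le> a"
  shows "colUP c2 N (omit (int N) {int N})
       = (MAX (i, j)\<in>{(i, j). 0 \<le> i \<and> i < j \<and> j \<le> int N + 1}.
            colUP c N (omit (int N + 1) {i, j}) - of_int (int N - i) * b - of_int (int N + 1 - j) * a)"
    (is "_ = (MAX (i, j)\<in>?P. ?g i j)")
proof -
  have one_step: "colUP c2 N (omit (int N) {int N})
       = (MAX k\<in>{0..int N}. colUP c1 N (omit (int N) {k}) - of_int (int N - k) * a)"
    by (rule colUP_one_step[OF evol2 ineq(2)])
  obtain k where k: "0 \<le> k" "k \<le> int N"
    and at_k: "colUP c2 N (omit (int N) {int N}) = colUP c1 N (omit (int N) {k}) - of_int (int N - k) * a"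
    using Max_in[of "(\<lambda>k. colUP c1 N (omit (int N) {k}) - of_int (int N - k) * a) ` {0..int N}"]
    unfolding one_step[symmetric] by auto
  obtain i j where ij: "0 \<le> i" "i < j" "j \<le> int N + 1" "k < j"
    and le: "colUP c1 N (omit (int N) {k})
           \<le> colUP c N (omit (int N + 1) {i, j}) - of_int (int N + 1 - i - j + k) * b"
    using colUP_evolved_omit_single_le[OF evol1 ineq(1) k] by blast
  have "?g i j - (colUP c N (omit (int N + 1) {i, j}) - of_int (int N + 1 - i - j + k) * b
        - of_int (int N - k) * a) = (a - b) * of_int (j - 1 - k)"
    by (simp add: algebra_simps)
  moreover have "0 \<le> (a - b) * of_int (j - 1 - k)" using \<open>b \<le> a\<close> ij by simp
  ultimately have le_g: "colUP c2 N (omit (int N) {int N}) \<le> ?g i j"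
    using at_k le by linarith
  have g_le: "?g i' j' \<le> colUP c2 N (omit (int N) {int N})" if "(i', j') \<in> ?P" for i' j'
  proof -
    have "?g i' j' \<le> colUP c1 N (omit (int N) {j' - 1}) - of_int (int N - (j' - 1)) * a"
      using colUP_evolved_omit_single_ge[OF evol1, of i' j'] that by (simp add: algebra_simps)
    also have "\<dots> \<le> colUP c2 N (omit (int N) {int N})"
      unfolding one_step by (rule Max_ge) (use that in \<open>auto intro!: image_eqI[where x = "j' - 1"]\<close>)
    finally show ?thesis .
  qed
  show ?thesis
  proof (rule eq_Max_imageI[OF finite_index_pairs])
    show "(i, j) \<in> ?P" using ij by simp
  qed (use le_g g_le in auto)
qed

section \<open>The max-plus bilinear identity\<close>

locale maxplus_pluecker =
  fixes M :: int and u :: "int \<Rightarrow> real" and Q :: "int \<Rightarrow> int \<Rightarrow> real"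
  assumes M_nonneg: "0 \<le> M"
    and Q_last: "\<And>i. 0 \<le> i \<Longrightarrow> i \<le> M \<Longrightarrow> Q i (M + 1) = u i"
    and pluecker: "\<And>k1 k2 k3. 0 \<le> k1 \<Longrightarrow> k1 < k2 \<Longrightarrow> k2 < k3 \<Longrightarrow> k3 \<le> M \<Longrightarrow>
      u k2 + Q k1 k3 = max (u k3 + Q k1 k2) (u k1 + Q k2 k3)"
begin

definition T :: "real \<Rightarrow> real" where
  "T x = (MAX k\<in>{0..M}. u k - of_int (M - k) * x)"

definition S :: "real \<Rightarrow> real \<Rightarrow> real" where
  "S x y = (MAX (i, j)\<in>{(i, j). 0 \<le> i \<and> i < j \<and> j \<le> M + 1}.
              Q i j - of_int (M - i) * x - of_int (M + 1 - j) * y)"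

lemma T_ge: "0 \<le> k \<Longrightarrow> k \<le> M \<Longrightarrow> u k - of_int (M - k) * x \<le> T x"
  unfolding T_def by (rule Max_ge) auto

lemma T_attained:
  obtains k where "0 \<le> k" "k \<le> M" "T x = u k - of_int (M - k) * x"
  using Max_in[of "(\<lambda>k. u k - of_int (M - k) * x) ` {0..M}"] M_nonneg unfolding T_def[symmetric]
  by fastforce

lemma S_ge: "0 \<le> i \<Longrightarrow> i < j \<Longrightarrow> j \<le> M + 1 \<Longrightarrow>
    Q i j - of_int (M - i) * x - of_int (M + 1 - j) * y \<le> S x y"
  unfolding S_def by (rule Max_ge) (auto intro: finite_index_pairs)

lemma S_attained:
  obtains i j where "0 \<le> i" "i < j" "j \<le> M + 1"
    "S x y = Q i j - of_int (M - i) * x - of_int (M + 1 - j) * y"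
proof -
  have "(0, 1) \<in> {(i, j). 0 \<le> i \<and> i < j \<and> j \<le> M + 1}" using M_nonneg by simp
  then have "S x y \<in> (\<lambda>(i, j). Q i j - of_int (M - i) * x - of_int (M + 1 - j) * y)
      ` {(i, j). 0 \<le> i \<and> i < j \<and> j \<le> M + 1}"
    unfolding S_def by (intro Max_in finite_imageI finite_index_pairs) blast
  then show ?thesis using that by auto
qed

lemma bilinear_le:
  assumes "c \<le> b" "b \<le> a"
  shows "T b + S c a \<le> max (T a + S c b - a + b) (T c + S b a)"
proof -
  obtain k where k: "0 \<le> k" "k \<le> M" and T_k: "T b = u k - of_int (M - k) * b"
    using T_attained .
  obtain i j where ij: "0 \<le> i" "i < j" "j \<le> M + 1"
    and S_ij: "S c a = Q i j - of_int (M - i) * c - of_int (M + 1 - j) * a"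
    using S_attained .
  consider "k \<le> i" | "j \<le> k" | "i < k" "k < j" "j = M + 1" | "i < k" "k < j" "j \<le> M"
    using ij by linarith
  then show ?thesis
  proof cases
    case 1
    have "T b + S c a + (b - c) * of_int (i - k)
        = (u k - of_int (M - k) * c) + (Q i j - of_int (M - i) * b - of_int (M + 1 - j) * a)"
      unfolding T_k S_ij by (simp add: algebra_simps)
    moreover have "0 \<le> (b - c) * of_int (i - k)" using 1 assms by simp
    ultimately show ?thesis using T_ge[OF k, of c] S_ge[OF ij, of b a] by linarith
  next
    case 2
    have "T b + S c a + (a - b) * of_int (k - j)
        = (u k - of_int (M - k) * a) + (Q i j - of_int (M - i) * c - of_int (M + 1 - j) * b) - a + b"
      unfolding T_k S_ij by (simp add: algebra_simps)
    moreover have "0 \<le> (a - b) * of_int (k - j)" using 2 assms by simp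
    ultimately show ?thesis using T_ge[OF k, of a] S_ge[OF ij, of c b] by linarith
  next
    case 3
    have "T b + S c a = (u i - of_int (M - i) * c) + (Q k (M + 1) - of_int (M - k) * b)"
      unfolding T_k S_ij using 3 ij k Q_last[of i] Q_last[of k] by (simp add: algebra_simps)
    then show ?thesis using T_ge[of i c] S_ge[of k "M + 1" b a] 3 ij k by fastforce
  next
    case 4
    have T_S: "T b + S c a = u k + Q i j - of_int (M - k) * b - of_int (M - i) * c - of_int (M + 1 - j) * a"
      unfolding T_k S_ij by simp
    show ?thesis
    proof (cases "u j + Q i k \<le> u i + Q k j")
      case True
      then have "T b + S c a = (u i - of_int (M - i) * c) + (Q k j - of_int (M - k) * b - of_int (M + 1 - j) * a)"
        using T_S pluecker[of i k j] 4 ij by simp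
      then show ?thesis using T_ge[of i c] S_ge[of k j b a] 4 ij k by fastforce
    next
      case False
      then have "T b + S c a = (u j - of_int (M - j) * a) + (Q i k - of_int (M - i) * c - of_int (M + 1 - k) * b) - a + b"
        using T_S pluecker[of i k j] 4 ij by (simp add: algebra_simps)
      then show ?thesis using T_ge[of j a] S_ge[of i k c b] 4 ij k by fastforce
    qed
  qed
qed

lemma bilinear_ge_first:
  assumes "b \<le> a"
  shows "T a + S c b - a + b \<le> T b + S c a"
proof -
  obtain k where k: "0 \<le> k" "k \<le> M" and T_k: "T a = u k - of_int (M - k) * a"
    using T_attained .
  obtain i j where ij: "0 \<le> i" "i < j" "j \<le> M + 1"
    and S_ij: "S c b = Q i j - of_int (M - i) * c - of_int (M + 1 - j) * b"
    using S_attained .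
  show ?thesis
  proof (cases "k \<le> j")
    case True
    have "T a + S c b - a + b + (a - b) * of_int (j - k)
        = (u k - of_int (M - k) * b) + (Q i j - of_int (M - i) * c - of_int (M + 1 - j) * a)"
      unfolding T_k S_ij by (simp add: algebra_simps)
    moreover have "0 \<le> (a - b) * of_int (j - k)" using True assms by simp
    ultimately show ?thesis using T_ge[OF k, of b] S_ge[OF ij, of c a] by linarith
  next
    case False
    have "u k + Q i j \<le> u j + Q i k" using pluecker[of i j k] ij k False by simp
    moreover have "T a + S c b - a + b
        = u k + Q i j - of_int (M - j) * b - of_int (M - i) * c - of_int (M + 1 - k) * a"
      unfolding T_k S_ij by (simp add: algebra_simps)
    ultimately show ?thesis using T_ge[of j b] S_ge[of i k c a] ij k False by fastforce
  qed
qed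

lemma bilinear_ge_second:
  assumes "c \<le> b"
  shows "T c + S b a \<le> T b + S c a"
proof -
  obtain k where k: "0 \<le> k" "k \<le> M" and T_k: "T c = u k - of_int (M - k) * c"
    using T_attained .
  obtain i j where ij: "0 \<le> i" "i < j" "j \<le> M + 1"
    and S_ij: "S b a = Q i j - of_int (M - i) * b - of_int (M + 1 - j) * a"
    using S_attained .
  consider "i \<le> k" | "k < i" "j = M + 1" | "k < i" "j \<le> M" using ij by linarith
  then show ?thesis
  proof cases
    case 1
    have "T c + S b a + (b - c) * of_int (k - i)
        = (u k - of_int (M - k) * b) + (Q i j - of_int (M - i) * c - of_int (M + 1 - j) * a)"
      unfolding T_k S_ij by (simp add: algebra_simps)
    moreover have "0 \<le> (b - c) * of_int (k - i)" using 1 assms by simp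
    ultimately show ?thesis using T_ge[OF k, of b] S_ge[OF ij, of c a] by linarith
  next
    case 2
    have "T c + S b a = (u i - of_int (M - i) * b) + (Q k (M + 1) - of_int (M - k) * c)"
      unfolding T_k S_ij using 2 ij k Q_last[of i] Q_last[of k] by (simp add: algebra_simps)
    then show ?thesis using T_ge[of i b] S_ge[of k "M + 1" c a] 2 ij k by fastforce
  next
    case 3
    have "u k + Q i j \<le> u i + Q k j" using pluecker[of k i j] ij k 3 by simp
    moreover have "T c + S b a
        = u k + Q i j - of_int (M - i) * b - of_int (M - k) * c - of_int (M + 1 - j) * a"
      unfolding T_k S_ij by (simp add: algebra_simps)
    ultimately show ?thesis using T_ge[of i b] S_ge[of k j c a] ij k 3 by fastforce
  qed
qed

theorem bilinear_identity:
  assumes "c \<le> b" "b \<le> a"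
  shows "T b + S c a = max (T a + S c b - a + b) (T c + S b a)"
  using bilinear_le[OF assms] bilinear_ge_first[OF assms(2)] bilinear_ge_second[OF assms(1)]
  by (simp add: antisym)

end

theorem theorem3p1:
  fixes N :: nat and a1 a2 a3 :: real
    and phi :: "nat \<Rightarrow> int \<Rightarrow> int \<Rightarrow> int \<Rightarrow> int \<Rightarrow> real"
  assumes N_pos: "N \<ge> 1"
    and a_ord: "a1 \<ge> a2" "a2 \<ge> a3"
    and evol1: "\<And>i l m n s. i \<in> {1..N} \<Longrightarrow>
        phi i (l+1) m n s = max (phi i l m n s) (phi i l m n (s+1) - a1)"
    and evol2: "\<And>i l m n s. i \<in> {1..N} \<Longrightarrow>
        phi i l (m+1) n s = max (phi i l m n s) (phi i l m n (s+1) - a2)"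
    and evol3: "\<And>i l m n s. i \<in> {1..N} \<Longrightarrow>
        phi i l m (n+1) s = max (phi i l m n s) (phi i l m n (s+1) - a3)"
    and ineq: "\<And>i1 i2 l m n s. i1 \<in> {1..N} \<Longrightarrow> i2 \<in> {1..N} \<Longrightarrow>
        phi i1 l m n s + phi i2 l m n s
          \<le> max (phi i1 l m n (s-1) + phi i2 l m n (s+1))
                 (phi i2 l m n (s-1) + phi i1 l m n (s+1))"
    and pluecker: "\<And>k1 k2 k3 l m n. 0 \<le> k1 \<Longrightarrow> k1 < k2 \<Longrightarrow> k2 < k3 \<Longrightarrow> k3 \<le> int N \<Longrightarrow>
        UPcols N phi l m n (omit (int N) {k2}) + UPcols N phi l m n (omit (int N + 1) {k1, k3})
        = max (UPcols N phi l m n (omit (int N) {k3}) + UPcols N phi l m n (omit (int N + 1) {k1, k2}))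
              (UPcols N phi l m n (omit (int N) {k1}) + UPcols N phi l m n (omit (int N + 1) {k2, k3}))"
  shows "\<forall>l m n. tau N phi l (m+1) n + tau N phi (l+1) m (n+1)
     = max (tau N phi (l+1) m n + tau N phi l (m+1) (n+1) - a1 + a2)
           (tau N phi l m (n+1) + tau N phi (l+1) (m+1) n)"
proof (intro allI)
  fix l m n
  define c where "c l m n = (\<lambda>s i. phi (Suc i) l m n s)" for l m n
  have tau_eq: "tau N phi l m n = colUP (c l m n) N (omit (int N) {int N})" for l m n
    unfolding tau_def colUP_def c_def by (rule UP_cong) (simp add: nth_omit_single)
  have UPcols_eq: "UPcols N phi l m n cols = colUP (c l m n) N cols" for l m n cols
    unfolding UPcols_def colUP_def c_def ..
  have evol: "evolves (c l m n) (c (l + 1) m n) a1 N" "evolves (c l m n) (c l (m + 1) n) a2 N"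
      "evolves (c l m n) (c l m (n + 1)) a3 N" for l m n
    unfolding evolves_def c_def using evol1 evol2 evol3 by auto
  have ineq_c: "column_exchange_ineq (c l m n) N" for l m n
    unfolding column_exchange_ineq_def c_def using ineq by auto
  interpret maxplus_pluecker "int N" "\<lambda>k. colUP (c l m n) N (omit (int N) {k})"
      "\<lambda>i j. colUP (c l m n) N (omit (int N + 1) {i, j})"
    by unfold_locales (simp_all add: omit_pair_last pluecker[unfolded UPcols_eq])
  have "tau N phi (l + 1) m n = T a1" "tau N phi l (m + 1) n = T a2" "tau N phi l m (n + 1) = T a3"
    unfolding tau_eq T_def
    by (rule colUP_one_step[OF evol(1) ineq_c] colUP_one_step[OF evol(2) ineq_c]
          colUP_one_step[OF evol(3) ineq_c])+
  moreover have "tau N phi (l + 1) m (n + 1) = S a3 a1"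
    unfolding tau_eq S_def using a_ord by (intro colUP_two_steps[OF evol(3) evol(1) ineq_c ineq_c]) simp
  moreover have "tau N phi l (m + 1) (n + 1) = S a3 a2"
    unfolding tau_eq S_def using a_ord by (intro colUP_two_steps[OF evol(3) evol(2) ineq_c ineq_c]) simp
  moreover have "tau N phi (l + 1) (m + 1) n = S a2 a1"
    unfolding tau_eq S_def using a_ord by (intro colUP_two_steps[OF evol(2) evol(1) ineq_c ineq_c]) simp
  ultimately show "tau N phi l (m + 1) n + tau N phi (l + 1) m (n + 1)
     = max (tau N phi (l + 1) m n + tau N phi l (m + 1) (n + 1) - a1 + a2)
           (tau N phi l m (n + 1) + tau N phi (l + 1) (m + 1) n)"
    using bilinear_identity[OF a_ord(2) a_ord(1)] by simp
qed

end
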